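(* Let $Y(1),Y(2),\dots$ be i.i.d. real random variables with $\mathbf E Y(1)=0$ and $\mathbf E Y(1)^2<\infty$, and let $T(n)=Y(1)+\dots+Y(n)$. Let $(\mathcal F_k)_{k\ge0}$ be a filtration such that each $Y(k)$ is $\mathcal F_k$-measurable and independent of $\mathcal F_{k-1}$, and let $\sigma$ be a stopping time with respect to $(\mathcal F_k)$. Then for every $r>1$, every $t>0$ and every $n\ge1$, $$\mathbf P\big(T(n)\ge t,\ \sigma>n\big)\le \mathbf P\big(Y(1)\ge t/r\big)\sum_{i=1}^n\mathbf P(\sigma>i-1)+e^r\Big(\frac{n r\,\mathbf E Y(1)^2}{t^2}\Big)^r.$$ *)

theory Defs
  imports "HOL-Probability.Probability"
begin

text \<open>Infinite values are represented by the top element of enat.\<close>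
definition nat_stopping_time :: "(nat \<Rightarrow> 'a measure) \<Rightarrow> ('a \<Rightarrow> enat) \<Rightarrow> bool" where
  "nat_stopping_time F \<sigma> = (\<forall>k::nat. Measurable.pred (F k) (\<lambda>x. \<sigma> x \<le> enat k))"

end

theory Submission
  imports Defs
begin

(* Put y = t / r and split the event according to whether some summand Y k with k \<le> n
   reaches y. If one does, then \<sigma> > n \<ge> k - 1, and since the event {\<sigma> > k - 1} lies in
   F (k - 1), which is independent of Y k, this costs at most P(Y 1 \<ge> y) P(\<sigma> > k - 1).
   If none does, Chernoff's bound applies to the summands truncated at y: for z < y one has
   exp (h z) \<le> 1 + h z + z^2 exp (h y) / y^2, hence E[exp (h Y) 1{Y < y}] \<le> 1 + E Y^2 exp (h y) / y^2
   because E Y = 0, and the choice exp (h y) = 1 / q with q = n r E Y^2 / t^2 turns the bound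
   into exp r * q powr r. *)

lemma exp_le_quadratic_of_nonpos:
  fixes u :: real
  assumes "u \<le> 0"
  shows "exp u \<le> 1 + u + u\<^sup>2 / 2"
proof (cases "u = 0")
  case False
  obtain \<xi> where "exp u = (\<Sum>m<3. u ^ m / fact m) + exp \<xi> / fact 3 * u ^ 3"
    using Maclaurin_exp_lt[OF False, of 3] by auto
  moreover have "exp \<xi> / fact 3 * u ^ 3 \<le> 0"
    using assms by (intro mult_nonneg_nonpos) (auto simp: power_le_zero_eq)
  ultimately show ?thesis
    by (simp add: numeral_3_eq_3 power2_eq_square)
qed simp

lemma exp_le_quadratic_of_nonneg:
  fixes u v :: real
  assumes "0 \<le> u" "u \<le> v" "0 < v"
  shows "exp u \<le> 1 + u + u\<^sup>2 * ((exp v - 1 - v) / v\<^sup>2)"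
proof -
  let ?a = "\<lambda>x n. inverse (fact (n + 2)) * x ^ (n + 2) :: real"
  have "?a u n \<le> u\<^sup>2 / v\<^sup>2 * ?a v n" for n
  proof -
    have "u ^ (n + 2) = u\<^sup>2 * u ^ n"
      by (simp add: power_add power2_eq_square)
    also have "\<dots> \<le> u\<^sup>2 * v ^ n"
      using assms by (intro mult_left_mono power_mono) auto
    also have "\<dots> = u\<^sup>2 / v\<^sup>2 * v ^ (n + 2)"
      using assms by (simp add: power_add power2_eq_square)
    finally have "u ^ (n + 2) \<le> u\<^sup>2 / v\<^sup>2 * v ^ (n + 2)" .
    then show ?thesis
      by (metis mult.left_commute mult_left_mono inverse_nonnegative_iff_nonnegative fact_ge_zero)
  qed
  then have "(\<Sum>n. ?a u n) \<le> (\<Sum>n. u\<^sup>2 / v\<^sup>2 * ?a v n)"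
    by (intro suminf_le summable_mult summable_exp[THEN summable_ignore_initial_segment])
  also have "\<dots> = u\<^sup>2 / v\<^sup>2 * (\<Sum>n. ?a v n)"
    by (intro suminf_mult summable_exp[THEN summable_ignore_initial_segment])
  also have "(\<Sum>n. ?a v n) = exp v - 1 - v"
    using exp_first_two_terms[of v] by simp
  finally show ?thesis
    using exp_first_two_terms[of u] by simp
qed

lemma exp_le_one_plus_quadratic:
  fixes u v :: real
  assumes "u \<le> v" "0 < v"
  shows "exp u \<le> 1 + u + u\<^sup>2 * (exp v / v\<^sup>2)"
proof (cases "u \<le> 0")
  case True
  have "v\<^sup>2 / 2 \<le> exp v"
    using exp_lower_Taylor_quadratic[of v] assms by simp
  then have "u\<^sup>2 * (1 / 2) \<le> u\<^sup>2 * (exp v / v\<^sup>2)"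
    using assms by (intro mult_left_mono) (auto simp: field_simps)
  then show ?thesis
    using exp_le_quadratic_of_nonpos[OF True] by linarith
next
  case False
  then have "u\<^sup>2 * ((exp v - 1 - v) / v\<^sup>2) \<le> u\<^sup>2 * (exp v / v\<^sup>2)"
    using assms by (intro mult_left_mono divide_right_mono) auto
  then show ?thesis
    using exp_le_quadratic_of_nonneg[of u v] False assms by simp
qed

lemma integral_comp_eq_of_distr_eq:
  fixes f :: "real \<Rightarrow> real"
  assumes "distr M borel X = distr M borel Z"
    and [measurable]: "X \<in> borel_measurable M" "Z \<in> borel_measurable M" "f \<in> borel_measurable borel"
  shows "(\<integral>x. f (X x) \<partial>M) = (\<integral>x. f (Z x) \<partial>M)"
  using integral_distr[of X M borel f] integral_distr[of Z M borel f] assms(1) by simp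

lemma measure_ge_eq_of_distr_eq:
  fixes X Z :: "'a \<Rightarrow> real"
  assumes "distr M borel X = distr M borel Z"
    and [measurable]: "X \<in> borel_measurable M" "Z \<in> borel_measurable M"
  shows "measure M {x \<in> space M. c \<le> X x} = measure M {x \<in> space M. c \<le> Z x}"
proof -
  have "measure M {x \<in> space M. c \<le> X x} = measure (distr M borel X) {c..}"
    by (simp add: measure_distr vimage_def Int_def conj_commute)
  also have "\<dots> = measure M {x \<in> space M. c \<le> Z x}"
    using assms(1) by (simp add: measure_distr vimage_def Int_def conj_commute)
  finally show ?thesis .
qed

lemma chernoff_bound_optimized:
  fixes p s t r :: real and n :: nat
  assumes bound: "\<And>h. 0 < h \<Longrightarrow> p \<le> exp (- h * t) * (1 + s * (exp (h * (t / r)) / (t / r)\<^sup>2)) ^ n"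
    and "p \<le> 1" "0 \<le> s" "1 < r" "0 < t"
  shows "p \<le> exp r * (real n * r * s / t\<^sup>2) powr r"
proof -
  define q where "q = real n * r * s / t\<^sup>2"
  define y where "y = t / r"
  have "0 \<le> q" "0 < y"
    using assms by (auto simp: q_def y_def)
  consider "q = 0" | "0 < q" "q < 1" | "1 \<le> q"
    using \<open>0 \<le> q\<close> by linarith
  then have "p \<le> exp r * q powr r"
  proof cases
    case 1
    then have "n = 0 \<or> s = 0"
      using assms by (simp add: q_def)
    then have "p \<le> exp (- h * t)" if "0 < h" for h
      using bound[OF that] by auto
    moreover have "filterlim (\<lambda>h. h * t) at_top at_top"
      using filterlim_tendsto_pos_mult_at_top[OF tendsto_const \<open>0 < t\<close> filterlim_ident]
      by (simp add: mult.commute)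
    then have "((\<lambda>h. exp (- h * t)) \<longlongrightarrow> 0) at_top"
      by (intro filterlim_compose[OF exp_at_bot]) (simp add: filterlim_uminus_at_top)
    ultimately have "p \<le> 0"
      by (intro tendsto_lowerbound[where f = "\<lambda>h. exp (- h * t)"])
        (auto simp: eventually_at_top_dense intro!: exI[of _ 0])
    then show ?thesis
      using 1 by simp
  next
    case 2
    then have "s \<noteq> 0" "n \<noteq> 0"
      unfolding q_def by (metis divide_eq_0_iff less_irrefl mult_zero_left mult_zero_right of_nat_0)+
    define h where "h = - ln q / y"
    have "0 < h"
      using 2 \<open>0 < y\<close> by (simp add: h_def divide_neg_pos)
    have exp_hy: "exp (h * y) = inverse q"
      using 2 \<open>0 < y\<close> by (simp add: h_def exp_minus exp_ln)
    have exp_ht: "exp (- h * t) = q powr r"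
      using 2 assms by (simp add: h_def y_def powr_def field_simps)
    have exponent: "real n * (s * (exp (h * y) / y\<^sup>2)) = r"
      using \<open>s \<noteq> 0\<close> \<open>n \<noteq> 0\<close> \<open>1 < r\<close> \<open>0 < t\<close> unfolding exp_hy
      by (simp add: q_def y_def field_simps power2_eq_square)
    have "p \<le> exp (- h * t) * (1 + s * (exp (h * y) / y\<^sup>2)) ^ n"
      using bound[OF \<open>0 < h\<close>] by (simp add: y_def)
    also have "\<dots> \<le> exp (- h * t) * exp (s * (exp (h * y) / y\<^sup>2)) ^ n"
      using assms by (intro mult_left_mono power_mono) (auto simp: exp_ge_add_one_self)
    also have "\<dots> = exp (- h * t) * exp (real n * (s * (exp (h * y) / y\<^sup>2)))"
      by (simp flip: exp_of_nat_mult)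
    finally show ?thesis
      using exponent exp_ht by (simp add: mult.commute)
  next
    case 3
    have "1 * 1 \<le> exp r * q powr r"
      using 3 assms by (intro mult_mono ge_one_powr_ge_zero) auto
    then show ?thesis
      using \<open>p \<le> 1\<close> by simp
  qed
  then show ?thesis
    unfolding q_def .
qed

lemma nat_stopping_time_gt_in_sets:
  assumes "filtration \<Omega> F" "nat_stopping_time F \<sigma>"
  shows "{x \<in> \<Omega>. enat k < \<sigma> x} \<in> sets (F k)"
proof -
  have "Measurable.pred (F k) (\<lambda>x. \<not> \<sigma> x \<le> enat k)"
    using assms(2) unfolding nat_stopping_time_def by (intro pred_intros_logic) simp
  then show ?thesis
    using filtration.space_F[OF assms(1)] by (simp add: pred_def not_le)
qed

context prob_space
begin

lemma truncated_exp_moment_le: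
  fixes Z :: "'a \<Rightarrow> real"
  assumes Z: "integrable M Z" "expectation Z = 0" "integrable M (\<lambda>x. (Z x)\<^sup>2)"
    and "0 < h" "0 < y"
  shows "expectation (\<lambda>x. if Z x < y then exp (h * Z x) else 0)
    \<le> 1 + expectation (\<lambda>x. (Z x)\<^sup>2) * (exp (h * y) / y\<^sup>2)"
proof -
  define c where "c = exp (h * y) / y\<^sup>2"
  have [measurable]: "Z \<in> borel_measurable M"
    using Z(1) by auto
  have pointwise: "(if z < y then exp (h * z) else 0) \<le> 1 + h * z + z\<^sup>2 * c" for z
  proof (cases "z < y")
    case True
    have "exp (h * z) \<le> 1 + h * z + (h * z)\<^sup>2 * (exp (h * y) / (h * y)\<^sup>2)"
      using True assms by (intro exp_le_one_plus_quadratic) auto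
    also have "(h * z)\<^sup>2 * (exp (h * y) / (h * y)\<^sup>2) = z\<^sup>2 * c"
      using assms unfolding c_def by (simp add: power_mult_distrib field_simps)
    finally show ?thesis
      using True by simp
  next
    case False
    then show ?thesis
      using assms unfolding c_def by simp
  qed
  have "expectation (\<lambda>x. if Z x < y then exp (h * Z x) else 0)
      \<le> expectation (\<lambda>x. 1 + h * Z x + (Z x)\<^sup>2 * c)"
  proof (rule integral_mono)
    show "integrable M (\<lambda>x. if Z x < y then exp (h * Z x) else 0)"
      using \<open>0 < h\<close> by (intro integrable_const_bound[where B = "exp (h * y)"]) auto
  qed (use Z pointwise in auto)
  also have "\<dots> = 1 + expectation (\<lambda>x. (Z x)\<^sup>2) * c"
    using Z by (simp add: prob_space)
  finally show ?thesis
    unfolding c_def .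
qed

lemma truncated_chernoff_iid:
  fixes X :: "'i \<Rightarrow> 'a \<Rightarrow> real" and Z :: "'a \<Rightarrow> real"
  assumes indep: "indep_vars (\<lambda>_. borel) X I" and "finite I"
    and same_distr: "\<And>i. i \<in> I \<Longrightarrow> distr M borel (X i) = distr M borel Z"
    and Z: "integrable M Z" "expectation Z = 0" "integrable M (\<lambda>x. (Z x)\<^sup>2)"
    and "0 < h" "0 < y"
  shows "prob {x \<in> space M. t \<le> (\<Sum>i\<in>I. X i x) \<and> (\<forall>i\<in>I. X i x < y)}
    \<le> exp (- h * t) * (1 + expectation (\<lambda>x. (Z x)\<^sup>2) * (exp (h * y) / y\<^sup>2)) ^ card I"
proof -
  define g where "g z = (if z < y then exp (h * z) else 0)" for z
  define S where "S = {x \<in> space M. t \<le> (\<Sum>i\<in>I. X i x) \<and> (\<forall>i\<in>I. X i x < y)}"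
  have [measurable]: "g \<in> borel_measurable borel"
    unfolding g_def by measurable
  have [measurable]: "X i \<in> borel_measurable M" if "i \<in> I" for i
    using indep that unfolding indep_vars_def by auto
  have [measurable]: "Z \<in> borel_measurable M"
    using Z(1) by auto
  have g_nonneg: "0 \<le> g z" for z
    unfolding g_def by simp
  have g_integrable: "integrable M (\<lambda>x. g (W x))" if "W \<in> borel_measurable M" for W
    using that \<open>0 < h\<close>
    by (intro integrable_const_bound[where B = "exp (h * y)"]) (auto simp: g_def)
  have g_indep: "indep_vars (\<lambda>_. borel) (\<lambda>i x. g (X i x)) I"
    using indep by (rule indep_vars_compose2) auto
  have indicator_le: "indicator S x \<le> exp (- h * t) * (\<Prod>i\<in>I. g (X i x))" for x
  proof (cases "x \<in> S")
    case True
    then have "(\<Prod>i\<in>I. g (X i x)) = exp (h * (\<Sum>i\<in>I. X i x))"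
      using \<open>finite I\<close> unfolding S_def g_def by (simp add: exp_sum sum_distrib_left)
    moreover have "h * t \<le> h * (\<Sum>i\<in>I. X i x)"
      using True \<open>0 < h\<close> unfolding S_def by simp
    ultimately show ?thesis
      using True by (simp flip: exp_add)
  qed (simp add: g_nonneg prod_nonneg)
  have "S \<in> events"
    unfolding S_def using \<open>finite I\<close> by measurable
  then have "prob S = expectation (indicator S)"
    by simp
  also have "\<dots> \<le> expectation (\<lambda>x. exp (- h * t) * (\<Prod>i\<in>I. g (X i x)))"
    using \<open>S \<in> events\<close> indicator_le g_integrable
    by (intro integral_mono integrable_mult_right indep_vars_integrable[OF \<open>finite I\<close> g_indep])
      (auto simp: less_top[symmetric])
  also have "\<dots> = exp (- h * t) * (\<Prod>i\<in>I. expectation (\<lambda>x. g (X i x)))"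
    using g_integrable by (simp add: indep_vars_lebesgue_integral[OF \<open>finite I\<close> g_indep])
  also have "(\<Prod>i\<in>I. expectation (\<lambda>x. g (X i x))) = (\<Prod>i\<in>I. expectation (\<lambda>x. g (Z x)))"
    using same_distr by (intro prod.cong refl integral_comp_eq_of_distr_eq) auto
  also have "\<dots> \<le> (1 + expectation (\<lambda>x. (Z x)\<^sup>2) * (exp (h * y) / y\<^sup>2)) ^ card I"
    using truncated_exp_moment_le[OF Z \<open>0 < h\<close> \<open>0 < y\<close>]
    by (simp add: g_def integral_nonneg_AE g_nonneg power_mono)
  finally show ?thesis
    unfolding S_def by (simp add: mult_left_mono)
qed

lemma prob_ge_and_stopping_time_gt:
  fixes X :: "'a \<Rightarrow> real"
  assumes "filtration (space M) F" "nat_stopping_time F \<sigma>"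
    and "indep_set {X -` A \<inter> space M | A. A \<in> sets borel} (sets (F k))"
  shows "prob {x \<in> space M. c \<le> X x \<and> enat k < \<sigma> x}
    = prob {x \<in> space M. c \<le> X x} * prob {x \<in> space M. enat k < \<sigma> x}"
proof -
  have "{x \<in> space M. c \<le> X x} \<in> {X -` A \<inter> space M | A. A \<in> sets borel}"
    by (intro CollectI exI[of _ "{c..}"]) auto
  moreover have "{x \<in> space M. enat k < \<sigma> x} \<in> sets (F k)"
    using assms(1,2) by (rule nat_stopping_time_gt_in_sets)
  ultimately have "prob ({x \<in> space M. c \<le> X x} \<inter> {x \<in> space M. enat k < \<sigma> x})
      = prob {x \<in> space M. c \<le> X x} * prob {x \<in> space M. enat k < \<sigma> x}"
    using assms(3) unfolding indep_sets2_eq by simp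
  moreover have "{x \<in> space M. c \<le> X x} \<inter> {x \<in> space M. enat k < \<sigma> x}
      = {x \<in> space M. c \<le> X x \<and> enat k < \<sigma> x}"
    by auto
  ultimately show ?thesis
    by simp
qed

lemma prob_stopped_sum_ge_split:
  fixes X :: "nat \<Rightarrow> 'a \<Rightarrow> real" and \<sigma> :: "'a \<Rightarrow> enat"
  assumes [measurable]: "\<And>k. k \<in> {1..n} \<Longrightarrow> X k \<in> borel_measurable M"
    and stopping_events: "\<And>k. {x \<in> space M. enat k < \<sigma> x} \<in> events"
  shows "prob {x \<in> space M. t \<le> (\<Sum>k=1..n. X k x) \<and> enat n < \<sigma> x}
    \<le> prob {x \<in> space M. t \<le> (\<Sum>k=1..n. X k x) \<and> (\<forall>k\<in>{1..n}. X k x < y)}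
      + (\<Sum>k=1..n. prob {x \<in> space M. y \<le> X k x \<and> enat (k - 1) < \<sigma> x})"
proof -
  let ?small = "{x \<in> space M. t \<le> (\<Sum>k=1..n. X k x) \<and> (\<forall>k\<in>{1..n}. X k x < y)}"
  let ?big = "\<lambda>k. {x \<in> space M. y \<le> X k x \<and> enat (k - 1) < \<sigma> x}"
  have "{x \<in> space M. t \<le> (\<Sum>k=1..n. X k x) \<and> enat n < \<sigma> x} \<subseteq> ?small \<union> (\<Union>k\<in>{1..n}. ?big k)"
  proof (intro subsetI)
    fix x assume x: "x \<in> {x \<in> space M. t \<le> (\<Sum>k=1..n. X k x) \<and> enat n < \<sigma> x}"
    show "x \<in> ?small \<union> (\<Union>k\<in>{1..n}. ?big k)"
    proof (cases "\<forall>k\<in>{1..n}. X k x < y")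
      case False
      then obtain k where k: "k \<in> {1..n}" "y \<le> X k x"
        by (auto simp: not_less)
      have "enat (k - 1) < \<sigma> x"
        using k x by (auto intro: le_less_trans[of _ "enat n"])
      then show ?thesis
        using k x by auto
    qed (use x in auto)
  qed
  moreover have "?small \<in> events"
    by measurable
  moreover have big_events: "?big k \<in> events" if "k \<in> {1..n}" for k
  proof -
    have "{x \<in> space M. y \<le> X k x} \<inter> {x \<in> space M. enat (k - 1) < \<sigma> x} \<in> events"
      using that stopping_events by (intro sets.Int) simp_all
    also have "{x \<in> space M. y \<le> X k x} \<inter> {x \<in> space M. enat (k - 1) < \<sigma> x} = ?big k"
      by blast
    finally show ?thesis .
  qed
  ultimately have "prob {x \<in> space M. t \<le> (\<Sum>k=1..n. X k x) \<and> enat n < \<sigma> x}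
      \<le> prob (?small \<union> (\<Union>k\<in>{1..n}. ?big k))"
    by (intro finite_measure_mono sets.Un sets.finite_UN finite_atLeastAtMost)
  also have "\<dots> \<le> prob ?small + prob (\<Union>k\<in>{1..n}. ?big k)"
    using \<open>?small \<in> events\<close> big_events by (intro measure_Un_le sets.finite_UN finite_atLeastAtMost)
  also have "prob (\<Union>k\<in>{1..n}. ?big k) \<le> (\<Sum>k=1..n. prob (?big k))"
    using big_events by (intro measure_UNION_le finite_atLeastAtMost)
  finally show ?thesis
    by simp
qed

end

theorem lemma3:
  fixes M :: "'a measure" and Y :: "nat \<Rightarrow> 'a \<Rightarrow> real" and F :: "nat \<Rightarrow> 'a measure"
    and \<sigma> :: "'a \<Rightarrow> enat" and r t :: real and n :: nat
  assumes "prob_space M"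
    and rv: "\<And>k. k \<ge> 1 \<Longrightarrow> Y k \<in> borel_measurable M"
    and indep: "prob_space.indep_vars M (\<lambda>_. borel) Y {1..}"
    and ident: "\<And>k. k \<ge> 1 \<Longrightarrow> distr M borel (Y k) = distr M borel (Y 1)"
    and mean0: "integrable M (Y 1)" "(\<integral>x. Y 1 x \<partial>M) = 0"
    and sq: "integrable M (\<lambda>x. (Y 1 x)\<^sup>2)"
    and filt: "filtration (space M) F" "\<And>k. sets (F k) \<subseteq> sets M"
    and adapted: "\<And>k. k \<ge> 1 \<Longrightarrow> Y k \<in> borel_measurable (F k)"
    and indepF: "\<And>k. k \<ge> 1 \<Longrightarrow>
        prob_space.indep_set M {Y k -` A \<inter> space M | A. A \<in> sets borel} (sets (F (k - 1)))"
    and stop: "nat_stopping_time F \<sigma>"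
    and "r > 1" and "t > 0" and "n \<ge> 1"
  shows "measure M {x \<in> space M. (\<Sum>k=1..n. Y k x) \<ge> t \<and> \<sigma> x > enat n}
    \<le> measure M {x \<in> space M. Y 1 x \<ge> t / r}
        * (\<Sum>i=1..n. measure M {x \<in> space M. \<sigma> x > enat (i - 1)})
      + exp r * (real n * r * (\<integral>x. (Y 1 x)\<^sup>2 \<partial>M) / t\<^sup>2) powr r"
proof -
  interpret prob_space M by fact
  define y where "y = t / r"
  have "0 < y"
    using \<open>r > 1\<close> \<open>t > 0\<close> by (simp add: y_def)
  have [measurable]: "Y k \<in> borel_measurable M" if "k \<in> {1..n}" for k
    using rv that by simp
  have same_distr: "distr M borel (Y k) = distr M borel (Y 1)" if "k \<in> {1..n}" for k
    using that by (intro ident) simp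
  have "{x \<in> space M. enat k < \<sigma> x} \<in> events" for k
    using nat_stopping_time_gt_in_sets[OF filt(1) stop] filt(2) by blast
  then have split: "measure M {x \<in> space M. (\<Sum>k=1..n. Y k x) \<ge> t \<and> \<sigma> x > enat n}
      \<le> prob {x \<in> space M. t \<le> (\<Sum>k=1..n. Y k x) \<and> (\<forall>k\<in>{1..n}. Y k x < y)}
        + (\<Sum>k=1..n. prob {x \<in> space M. y \<le> Y k x \<and> enat (k - 1) < \<sigma> x})"
    by (intro prob_stopped_sum_ge_split) simp
  have big_jump: "prob {x \<in> space M. y \<le> Y k x \<and> enat (k - 1) < \<sigma> x}
      = prob {x \<in> space M. y \<le> Y 1 x} * prob {x \<in> space M. enat (k - 1) < \<sigma> x}"
    if "k \<in> {1..n}" for k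
  proof -
    have "prob {x \<in> space M. y \<le> Y k x \<and> enat (k - 1) < \<sigma> x}
        = prob {x \<in> space M. y \<le> Y k x} * prob {x \<in> space M. enat (k - 1) < \<sigma> x}"
      using that indepF[of k] by (intro prob_ge_and_stopping_time_gt[OF filt(1) stop]) simp
    also have "prob {x \<in> space M. y \<le> Y k x} = prob {x \<in> space M. y \<le> Y 1 x}"
      using that rv by (intro measure_ge_eq_of_distr_eq same_distr) auto
    finally show ?thesis .
  qed
  have small: "prob {x \<in> space M. t \<le> (\<Sum>k=1..n. Y k x) \<and> (\<forall>k\<in>{1..n}. Y k x < y)}
      \<le> exp r * (real n * r * (\<integral>x. (Y 1 x)\<^sup>2 \<partial>M) / t\<^sup>2) powr r"
  proof (rule chernoff_bound_optimized)
    fix h :: real assume "0 < h"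
    have "indep_vars (\<lambda>_. borel) Y {1..n}"
      using indep by (rule indep_vars_subset) auto
    from truncated_chernoff_iid[OF this finite_atLeastAtMost same_distr mean0 sq \<open>0 < h\<close> \<open>0 < y\<close>]
    show "prob {x \<in> space M. t \<le> (\<Sum>k=1..n. Y k x) \<and> (\<forall>k\<in>{1..n}. Y k x < y)}
        \<le> exp (- h * t) * (1 + expectation (\<lambda>x. (Y 1 x)\<^sup>2) * (exp (h * (t / r)) / (t / r)\<^sup>2)) ^ n"
      by (simp add: y_def)
  qed (use \<open>r > 1\<close> \<open>t > 0\<close> in auto)
  have "(\<Sum>k=1..n. prob {x \<in> space M. y \<le> Y k x \<and> enat (k - 1) < \<sigma> x})
      = prob {x \<in> space M. y \<le> Y 1 x} * (\<Sum>k=1..n. prob {x \<in> space M. enat (k - 1) < \<sigma> x})"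
    unfolding sum_distrib_left by (rule sum.cong[OF refl big_jump])
  with split small show ?thesis
    unfolding y_def by linarith
qed

end
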